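(* Let $\varphi_1$ and $\varphi_2$ be two $\mathbb{T}$-gains on a connected graph $G$ with $n$ vertices and $m$ edges. If $\varphi_1(\overrightarrow{C_k(T)})=\varphi_2(\overrightarrow{C_k(T)})$ for $k=1,\dots,m-n+1$ holds for one normal spanning tree $T$ of $G$, then the same equalities hold for the directed fundamental cycles of any normal spanning tree of $G$.
   Context: Graphs are finite, simple and undirected. $\mathbb{T}=\{z\in\mathbb{C}:|z|=1\}$. Each edge $e_{st}$ of $G$ gives two oriented edges $\overrightarrow{e_{st}}$ and $\overrightarrow{e_{ts}}$. A $\mathbb{T}$-gain on $G$ is a map $\varphi$ from oriented edges to $\mathbb{T}$ with $\varphi(\overrightarrow{e_{ts}})=\varphi(\overrightarrow{e_{st}})^{-1}$. The gain of a directed cycle is the product of the gains of its oriented edges. A rooted spanning tree $T$ with root $v_r$ induces the tree order: $v_x\le v_y$ iff $v_x$ lies on the path in $T$ from $v_r$ to $v_y$; $T$ is a normal spanning tree if any two adjacent vertices of $G$ are comparable. The suitably oriented graph $\overrightarrow{G_T}$ orients each edge $e_{st}$ with $v_s\le v_t$ as $\overrightarrow{e_{st}}$ if $e_{st}\in E(T)$ and as $\overrightarrow{e_{ts}}$ otherwise. Each of the $m-n+1$ non-tree edges creates a unique (fundamental) cycle with $T$, which is a directed cycle $\overrightarrow{C_k(T)}$ in $\overrightarrow{G_T}$ (directed fundamental cycles). *)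

theory Defs
  imports Complex_Main
begin

definition simple_graph :: "'a set \<Rightarrow> 'a set set \<Rightarrow> bool" where
  "simple_graph V E \<longleftrightarrow> finite V \<and> (\<forall>e\<in>E. \<exists>x y. e = {x, y} \<and> x \<in> V \<and> y \<in> V \<and> x \<noteq> y)"

definition is_path :: "'a set set \<Rightarrow> 'a list \<Rightarrow> 'a \<Rightarrow> 'a \<Rightarrow> bool" where
  "is_path F p x y \<longleftrightarrow> p \<noteq> [] \<and> hd p = x \<and> last p = y \<and> distinct p
     \<and> successively (\<lambda>u v. {u, v} \<in> F) p"

definition connected_graph :: "'a set \<Rightarrow> 'a set set \<Rightarrow> bool" where
  "connected_graph V F \<longleftrightarrow> (\<forall>x\<in>V. \<forall>y\<in>V. \<exists>p. is_path F p x y)"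

definition acyclic_edges :: "'a set set \<Rightarrow> bool" where
  "acyclic_edges F \<longleftrightarrow> \<not> (\<exists>c. length c \<ge> 3 \<and> distinct c \<and>
       successively (\<lambda>u v. {u, v} \<in> F) c \<and> {last c, hd c} \<in> F)"

definition spanning_tree :: "'a set \<Rightarrow> 'a set set \<Rightarrow> 'a set set \<Rightarrow> bool" where
  "spanning_tree V E T \<longleftrightarrow> T \<subseteq> E \<and> connected_graph V T \<and> acyclic_edges T"

definition tree_le :: "'a set set \<Rightarrow> 'a \<Rightarrow> 'a \<Rightarrow> 'a \<Rightarrow> bool" where
  "tree_le T r x y \<longleftrightarrow> (\<exists>p. is_path T p r y \<and> x \<in> set p)"

definition normal_spanning_tree :: "'a set \<Rightarrow> 'a set set \<Rightarrow> 'a set set \<Rightarrow> 'a \<Rightarrow> bool" where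
  "normal_spanning_tree V E T r \<longleftrightarrow> r \<in> V \<and> spanning_tree V E T \<and>
     (\<forall>s t. {s, t} \<in> E \<longrightarrow> tree_le T r s t \<or> tree_le T r t s)"

(* T-gain: phi s t is the gain of the oriented edge e_st *)
definition T_gain :: "'a set set \<Rightarrow> ('a \<Rightarrow> 'a \<Rightarrow> complex) \<Rightarrow> bool" where
  "T_gain E \<phi> \<longleftrightarrow> (\<forall>s t. {s, t} \<in> E \<longrightarrow> cmod (\<phi> s t) = 1 \<and> \<phi> t s = inverse (\<phi> s t))"

fun walk_gain :: "('a \<Rightarrow> 'a \<Rightarrow> complex) \<Rightarrow> 'a list \<Rightarrow> complex" where
  "walk_gain \<phi> (x # y # xs) = \<phi> x y * walk_gain \<phi> (y # xs)"
| "walk_gain \<phi> _ = 1"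

(* directed fundamental cycle of the non-tree edge {s,t} with s \<le> t in the tree order:
   the tree path from s down to t (tree edges oriented from smaller to larger),
   closed by the oriented non-tree edge e_ts *)
definition fund_cycle :: "'a set set \<Rightarrow> 'a \<Rightarrow> 'a \<Rightarrow> 'a list" where
  "fund_cycle T s t = (THE p. is_path T p s t) @ [s]"

definition fund_cycle_gain :: "('a \<Rightarrow> 'a \<Rightarrow> complex) \<Rightarrow> 'a set set \<Rightarrow> 'a \<Rightarrow> 'a \<Rightarrow> complex" where
  "fund_cycle_gain \<phi> T s t = walk_gain \<phi> (fund_cycle T s t)"

end

theory Submission
  imports Defs
begin

text \<open>
  Put \<open>\<psi> = \<phi>1 / \<phi>2\<close>, again a gain with values of modulus 1; the hypothesis says that every directed
  fundamental cycle of \<open>T\<close> has \<open>\<psi>\<close>-gain 1. Let \<open>h v\<close> be the \<open>\<psi>\<close>-gain of the path in \<open>T\<close>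
  from the root to \<open>v\<close>. Since \<open>T\<close> is normal, the ends of every edge are comparable, and
  either the edge lies in \<open>T\<close> or its fundamental cycle has gain 1; in both cases
  \<open>h y = h x * \<psi> x y\<close>. So \<open>\<psi>\<close> is switching equivalent to the trivial gain, and the
  \<open>\<psi>\<close>-gain of any closed walk telescopes to 1, in particular that of every
  fundamental cycle of \<open>T'\<close> (of which only the spanning-tree property is used).
\<close>

lemma simple_graph_edgeD:
  assumes "simple_graph V E" and "{x, y} \<in> E"
  shows "x \<in> V" and "y \<in> V" and "x \<noteq> y"
  using assms unfolding simple_graph_def by (fastforce simp: doubleton_eq_iff)+

abbreviation is_walk :: "'a set set \<Rightarrow> 'a list \<Rightarrow> bool" where
  "is_walk E w \<equiv> successively (\<lambda>u v. {u, v} \<in> E) w"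

lemma is_walk_mono: "is_walk F w \<Longrightarrow> F \<subseteq> E \<Longrightarrow> is_walk E w"
  by (erule successively_mono) blast

lemma is_path_split:
  assumes "is_path F (a @ x # b) u w"
  shows "is_path F (a @ [x]) u x" and "is_path F (x # b) x w"
proof -
  have "is_walk F ((a @ [x]) @ b)" and "is_walk F (a @ x # b)"
    using assms by (auto simp: is_path_def)
  then show "is_path F (a @ [x]) u x" and "is_path F (x # b) x w"
    using assms unfolding is_path_def successively_append_iff by (cases a; auto)+
qed

lemma acyclic_edges_no_disjoint_paths:
  assumes "acyclic_edges F"
    and p: "is_path F (x # \<alpha> @ [z]) x z" and q: "is_path F (x # \<gamma> @ [z]) x z"
    and "set \<alpha> \<inter> set \<gamma> = {}" and "\<alpha> \<noteq> [] \<or> \<gamma> \<noteq> []"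
  shows False
proof -
  define c where "c = (x # \<alpha>) @ rev (\<gamma> @ [z])"
  have "length c \<ge> 3"
    using assms(5) by (cases \<alpha>; cases \<gamma>) (auto simp: c_def)
  moreover have "distinct c"
    using p q assms(4) by (auto simp: c_def is_path_def)
  moreover have "is_walk F c"
  proof -
    have "is_walk F ((x # \<alpha>) @ [z])"
      using p by (simp add: is_path_def)
    then have "is_walk F (x # \<alpha>)" and "{last (x # \<alpha>), z} \<in> F"
      unfolding successively_append_iff by auto
    moreover have "is_walk F (\<gamma> @ [z])"
      using q by (simp add: is_path_def successively_Cons)
    moreover have "is_walk F (rev (\<gamma> @ [z])) = is_walk F (\<gamma> @ [z])"
      by (subst successively_rev) (simp add: insert_commute)
    ultimately show ?thesis
      unfolding c_def successively_append_iff[of _ "x # \<alpha>" "rev (\<gamma> @ [z])"] by simp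
  qed
  moreover have "{last c, hd c} \<in> F"
    using q by (cases \<gamma>) (auto simp: c_def is_path_def last_rev insert_commute)
  ultimately show False
    using assms(1) unfolding acyclic_edges_def by blast
qed

lemma acyclic_edges_paths_same_second_vertex:
  assumes "acyclic_edges F" and p: "is_path F (x # u # p) x y" and q: "is_path F (x # v # q) x y"
  shows "u = v"
proof (rule ccontr)
  assume "u \<noteq> v"
  have "y \<in> set (u # p)" and "y \<in> set (v # q)"
    using p q unfolding is_path_def by (metis last_ConsR last_in_set list.distinct(1))+
  then obtain \<alpha> z \<beta> where p_split: "u # p = \<alpha> @ z # \<beta>" and "z \<in> set (v # q)"
    and \<alpha>_avoids_q: "\<forall>w \<in> set \<alpha>. w \<notin> set (v # q)"
    using split_list_first_prop[of "u # p" "\<lambda>w. w \<in> set (v # q)"] by blast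
  then obtain \<gamma> \<delta> where q_split: "v # q = \<gamma> @ z # \<delta>"
    by (metis split_list)
  have "is_path F (x # \<alpha> @ [z]) x z"
    using is_path_split(1)[of F "x # \<alpha>" z \<beta> x y] p p_split by simp
  moreover have "is_path F (x # \<gamma> @ [z]) x z"
    using is_path_split(1)[of F "x # \<gamma>" z \<delta> x y] q q_split by simp
  moreover have "set \<alpha> \<inter> set \<gamma> = {}"
    using \<alpha>_avoids_q q_split by auto
  moreover have "\<alpha> \<noteq> [] \<or> \<gamma> \<noteq> []"
    using \<open>u \<noteq> v\<close> p_split q_split by auto
  ultimately show False
    using acyclic_edges_no_disjoint_paths[OF assms(1)] by blast
qed

lemma is_path_Cons_eq_Nil_iff: "is_path F (x # p) x y \<Longrightarrow> p = [] \<longleftrightarrow> y = x"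
  unfolding is_path_def by (cases p rule: rev_cases) auto

lemma acyclic_edges_path_unique:
  assumes "acyclic_edges F" and "is_path F p x y" and "is_path F q x y"
  shows "p = q"
proof -
  have "p' = q'" if "is_path F (x # p') x y" and "is_path F (x # q') x y" for x p' q'
    using that
  proof (induction p' arbitrary: x q')
    case Nil
    then show ?case
      using is_path_Cons_eq_Nil_iff by metis
  next
    case (Cons u p')
    then obtain v q'' where q': "q' = v # q''"
      using is_path_Cons_eq_Nil_iff by (metis list.exhaust list.distinct(1))
    then have "is_path F (x # v # q'') x y"
      using Cons.prems(2) by simp
    then have "u = v"
      using acyclic_edges_paths_same_second_vertex[OF assms(1) Cons.prems(1)] by simp
    have "is_path F (u # p') u y" and "is_path F (u # q'') u y"
      using is_path_split(2)[of F "[x]" u p' x y] is_path_split(2)[of F "[x]" v q'' x y]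
        Cons.prems(1) \<open>is_path F (x # v # q'') x y\<close> \<open>u = v\<close> by simp_all
    then show ?case
      using Cons.IH q' \<open>u = v\<close> by simp
  qed
  moreover obtain p' q' where "p = x # p'" and "q = x # q'"
    using assms(2,3) unfolding is_path_def by (metis list.collapse)
  ultimately show ?thesis
    using assms(2,3) by simp
qed

definition tree_path :: "'a set set \<Rightarrow> 'a \<Rightarrow> 'a \<Rightarrow> 'a list" where
  "tree_path T x y = (THE p. is_path T p x y)"

lemma tree_path_eq: "acyclic_edges T \<Longrightarrow> is_path T p x y \<Longrightarrow> tree_path T x y = p"
  unfolding tree_path_def by (blast intro: acyclic_edges_path_unique)

lemma is_path_tree_path:
  assumes "spanning_tree V E T" and "x \<in> V" and "y \<in> V"
  shows "is_path T (tree_path T x y) x y"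
proof -
  obtain p where "is_path T p x y"
    using assms unfolding spanning_tree_def connected_graph_def by blast
  with assms(1) show ?thesis
    unfolding spanning_tree_def by (metis tree_path_eq)
qed

lemma fund_cycle_tree_path: "fund_cycle T s t = tree_path T s t @ [s]"
  by (simp add: fund_cycle_def tree_path_def)

lemma fund_cycle_closed_walk:
  assumes "spanning_tree V E T" and "{s, t} \<in> E" and "s \<in> V" and "t \<in> V"
  shows "is_walk E (fund_cycle T s t)" and "hd (fund_cycle T s t) = s"
    and "last (fund_cycle T s t) = s"
proof -
  have p: "is_path T (tree_path T s t) s t"
    using is_path_tree_path[OF assms(1,3,4)] .
  then have "is_walk E (tree_path T s t)"
    using assms(1) is_walk_mono unfolding spanning_tree_def is_path_def by blast
  with p assms(2) show "is_walk E (fund_cycle T s t)"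
    by (auto simp: fund_cycle_tree_path is_path_def successively_append_iff insert_commute)
  show "hd (fund_cycle T s t) = s"
    using p by (auto simp: fund_cycle_tree_path is_path_def)
  show "last (fund_cycle T s t) = s"
    by (simp add: fund_cycle_tree_path)
qed

lemma walk_gain_append:
  "walk_gain f (xs @ [x]) * walk_gain f (x # ys) = walk_gain f (xs @ x # ys)"
proof (induction xs)
  case (Cons a xs)
  then show ?case
    by (cases xs) (simp_all add: mult.assoc)
qed simp

lemma walk_gain_snoc: "xs \<noteq> [] \<Longrightarrow> walk_gain f (xs @ [x]) = walk_gain f xs * f (last xs) x"
  by (induction xs rule: induct_list012) (auto simp: mult.assoc)

lemma walk_gain_divide: "walk_gain (\<lambda>a b. f a b / g a b) w = walk_gain f w / walk_gain g w"
  by (induction f w rule: walk_gain.induct) auto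

lemma norm_walk_gain:
  assumes "T_gain E f" and "is_walk E w"
  shows "cmod (walk_gain f w) = 1"
  using assms(2)
proof (induction w rule: induct_list012)
  case (3 x y xs)
  then have "cmod (f x y) = 1"
    using assms(1) unfolding T_gain_def by simp
  with 3 show ?case
    by (simp add: norm_mult)
qed simp_all

lemma walk_gain_telescope:
  assumes "\<forall>x y. {x, y} \<in> E \<longrightarrow> h y = h x * f x y" and "is_walk E w" and "w \<noteq> []"
  shows "walk_gain f w * h (hd w) = h (last w)"
  using assms(2,3)
proof (induction w rule: induct_list012)
  case (3 x y xs)
  then have "walk_gain f (y # xs) * h y = h (last (y # xs))"
    by simp
  moreover have "h y = h x * f x y"
    using assms(1) "3.prems" by simp
  ultimately show ?case
    by (simp add: algebra_simps)
qed auto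

lemma closed_walk_gain_eq_1:
  assumes "\<forall>x y. {x, y} \<in> E \<longrightarrow> h y = h x * f x y" and "is_walk E w" and "w \<noteq> []"
    and "last w = hd w" and "h (hd w) \<noteq> 0"
  shows "walk_gain f w = 1"
  using walk_gain_telescope[OF assms(1-3)] assms(4,5) by simp

lemma T_gain_mult_reverse:
  assumes "T_gain E \<psi>" and "{x, y} \<in> E"
  shows "\<psi> x y * \<psi> y x = 1"
proof -
  have "cmod (\<psi> x y) = 1" and reverse: "\<psi> y x = inverse (\<psi> x y)"
    using assms unfolding T_gain_def by auto
  then have "\<psi> x y \<noteq> 0"
    by auto
  with reverse show ?thesis
    by simp
qed

lemma T_gain_divide:
  assumes "T_gain E \<phi>1" and "T_gain E \<phi>2"
  shows "T_gain E (\<lambda>a b. \<phi>1 a b / \<phi>2 a b)"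
  unfolding T_gain_def
proof (intro allI impI conjI)
  fix s t
  assume "{s, t} \<in> E"
  then have "cmod (\<phi>1 s t) = 1" and "\<phi>1 t s = inverse (\<phi>1 s t)"
    and "cmod (\<phi>2 s t) = 1" and "\<phi>2 t s = inverse (\<phi>2 s t)"
    using assms unfolding T_gain_def by blast+
  then show "cmod (\<phi>1 s t / \<phi>2 s t) = 1"
    by (simp add: norm_divide)
  from \<open>\<phi>1 t s = inverse (\<phi>1 s t)\<close> \<open>\<phi>2 t s = inverse (\<phi>2 s t)\<close>
  show "\<phi>1 t s / \<phi>2 t s = inverse (\<phi>1 s t / \<phi>2 s t)"
    by (simp add: divide_inverse mult.commute)
qed

lemma walk_gain_eq_iff_quotient_eq_1:
  assumes "T_gain E \<phi>2" and "is_walk E w"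
  shows "walk_gain \<phi>1 w = walk_gain \<phi>2 w \<longleftrightarrow> walk_gain (\<lambda>a b. \<phi>1 a b / \<phi>2 a b) w = 1"
proof -
  have "cmod (walk_gain \<phi>2 w) = 1"
    using norm_walk_gain[OF assms] .
  then have "walk_gain \<phi>2 w \<noteq> 0"
    by auto
  then show ?thesis
    by (simp add: walk_gain_divide)
qed

lemma fund_cycle_gain_eq_iff_quotient_eq_1:
  assumes "spanning_tree V E T" and "T_gain E \<phi>2" and "{s, t} \<in> E" and "s \<in> V" and "t \<in> V"
  shows "fund_cycle_gain \<phi>1 T s t = fund_cycle_gain \<phi>2 T s t \<longleftrightarrow>
    fund_cycle_gain (\<lambda>a b. \<phi>1 a b / \<phi>2 a b) T s t = 1"
  unfolding fund_cycle_gain_def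
  using walk_gain_eq_iff_quotient_eq_1[OF assms(2) fund_cycle_closed_walk(1)[OF assms(1,3-5)]] .

lemma norm_tree_path_gain:
  assumes "spanning_tree V E T" and "T_gain E \<psi>" and "x \<in> V" and "y \<in> V"
  shows "cmod (walk_gain \<psi> (tree_path T x y)) = 1"
proof -
  have "is_walk T (tree_path T x y)"
    using is_path_tree_path[OF assms(1,3,4)] unfolding is_path_def by blast
  then have "is_walk E (tree_path T x y)"
    using assms(1) is_walk_mono unfolding spanning_tree_def by blast
  then show ?thesis
    by (rule norm_walk_gain[OF assms(2)])
qed

lemma tree_path_gain_split:
  assumes "acyclic_edges T" and "tree_le T r x y"
  shows "walk_gain f (tree_path T r y) = walk_gain f (tree_path T r x) * walk_gain f (tree_path T x y)"
proof -
  obtain p where p: "is_path T p r y" and "x \<in> set p"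
    using assms(2) unfolding tree_le_def by blast
  then obtain a b where p_split: "p = a @ x # b"
    by (metis split_list)
  have "tree_path T r y = a @ x # b"
    using tree_path_eq[OF assms(1) p] p_split by simp
  moreover have "tree_path T r x = a @ [x]" and "tree_path T x y = x # b"
    using is_path_split[of T a x b r y] p p_split tree_path_eq[OF assms(1)] by auto
  ultimately show ?thesis
    by (simp add: walk_gain_append)
qed

lemma tree_path_gain_eq_edge_gain:
  assumes "spanning_tree V E T" and "T_gain E \<psi>" and "{x, y} \<in> E"
    and "x \<in> V" and "y \<in> V" and "x \<noteq> y"
    and "{x, y} \<notin> T \<Longrightarrow> fund_cycle_gain \<psi> T x y = 1"
  shows "walk_gain \<psi> (tree_path T x y) = \<psi> x y"
proof (cases "{x, y} \<in> T")
  case True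
  with \<open>x \<noteq> y\<close> have "is_path T [x, y] x y"
    by (simp add: is_path_def)
  with assms(1) show ?thesis
    unfolding spanning_tree_def by (simp add: tree_path_eq)
next
  case False
  have "is_path T (tree_path T x y) x y"
    using is_path_tree_path[OF assms(1,4,5)] .
  then have "walk_gain \<psi> (tree_path T x y) * \<psi> y x = 1"
    using assms(7)[OF False] walk_gain_snoc[of "tree_path T x y" \<psi> x]
    unfolding fund_cycle_gain_def fund_cycle_tree_path is_path_def by auto
  moreover have "\<psi> x y * \<psi> y x = 1"
    using T_gain_mult_reverse[OF assms(2,3)] .
  ultimately show ?thesis
    by (metis mult_cancel_right mult_zero_right zero_neq_one)
qed

lemma normal_spanning_tree_potential:
  assumes "simple_graph V E" and "normal_spanning_tree V E T r" and "T_gain E \<psi>"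
    and "\<forall>s t. {s, t} \<in> E - T \<and> tree_le T r s t \<longrightarrow> fund_cycle_gain \<psi> T s t = 1"
    and "{x, y} \<in> E"
  shows "walk_gain \<psi> (tree_path T r y) = walk_gain \<psi> (tree_path T r x) * \<psi> x y"
proof -
  have T: "spanning_tree V E T"
    using assms(2) unfolding normal_spanning_tree_def by blast
  have comparable: "walk_gain \<psi> (tree_path T r b) = walk_gain \<psi> (tree_path T r a) * \<psi> a b"
    if "{a, b} \<in> E" and "tree_le T r a b" for a b
  proof -
    have "walk_gain \<psi> (tree_path T a b) = \<psi> a b"
      using tree_path_gain_eq_edge_gain[OF T assms(3) that(1)] simple_graph_edgeD[OF assms(1) that(1)]
        assms(4) that by blast
    then show ?thesis
      using tree_path_gain_split[of T r a b] T that(2) unfolding spanning_tree_def by simp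
  qed
  consider "tree_le T r x y" | "tree_le T r y x"
    using assms(2,5) unfolding normal_spanning_tree_def by blast
  then show ?thesis
  proof cases
    case 1
    with comparable assms(5) show ?thesis
      by blast
  next
    case 2
    moreover have "{y, x} \<in> E"
      using assms(5) by (simp add: insert_commute)
    ultimately have "walk_gain \<psi> (tree_path T r x) = walk_gain \<psi> (tree_path T r y) * \<psi> y x"
      using comparable by blast
    moreover have "\<psi> y x * \<psi> x y = 1"
      using T_gain_mult_reverse[OF assms(3) \<open>{y, x} \<in> E\<close>] .
    ultimately show ?thesis
      by (simp add: mult.assoc)
  qed
qed

lemma fund_cycle_gain_eq_1_if_potential:
  assumes "spanning_tree V E T" and "\<forall>x y. {x, y} \<in> E \<longrightarrow> h y = h x * \<psi> x y"
    and "{s, t} \<in> E" and "s \<in> V" and "t \<in> V" and "h s \<noteq> 0"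
  shows "fund_cycle_gain \<psi> T s t = 1"
proof -
  let ?c = "fund_cycle T s t"
  have "is_walk E ?c" and "hd ?c = s" and "last ?c = s"
    using fund_cycle_closed_walk[OF assms(1,3-5)] by blast+
  moreover have "?c \<noteq> []"
    by (simp add: fund_cycle_tree_path)
  ultimately show ?thesis
    unfolding fund_cycle_gain_def using closed_walk_gain_eq_1[OF assms(2), of ?c] assms(6) by simp
qed

theorem corollary3p1:
  fixes V :: "'a set" and E T T' :: "'a set set" and r r' :: 'a
    and \<phi>1 \<phi>2 :: "'a \<Rightarrow> 'a \<Rightarrow> complex"
  assumes "simple_graph V E" and "connected_graph V E"
    and "T_gain E \<phi>1" and "T_gain E \<phi>2"
    and "normal_spanning_tree V E T r"
    and "\<forall>s t. {s, t} \<in> E - T \<and> tree_le T r s t \<longrightarrow>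
           fund_cycle_gain \<phi>1 T s t = fund_cycle_gain \<phi>2 T s t"
    and "normal_spanning_tree V E T' r'"
  shows "\<forall>s t. {s, t} \<in> E - T' \<and> tree_le T' r' s t \<longrightarrow>
           fund_cycle_gain \<phi>1 T' s t = fund_cycle_gain \<phi>2 T' s t"
proof (intro allI impI)
  fix s t
  assume "{s, t} \<in> E - T' \<and> tree_le T' r' s t"
  then have st: "{s, t} \<in> E" "s \<in> V" "t \<in> V"
    using simple_graph_edgeD[OF assms(1)] by blast+
  define \<psi> where "\<psi> a b = \<phi>1 a b / \<phi>2 a b" for a b
  define h where "h v = walk_gain \<psi> (tree_path T r v)" for v
  have \<psi>: "T_gain E \<psi>"
    unfolding \<psi>_def using T_gain_divide[OF assms(3,4)] .
  have T: "spanning_tree V E T" and T': "spanning_tree V E T'" and "r \<in> V"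
    using assms(5,7) unfolding normal_spanning_tree_def by blast+
  have "\<forall>a b. {a, b} \<in> E - T \<and> tree_le T r a b \<longrightarrow> fund_cycle_gain \<psi> T a b = 1"
    using assms(6) fund_cycle_gain_eq_iff_quotient_eq_1[OF T assms(4)] simple_graph_edgeD[OF assms(1)]
    unfolding \<psi>_def by blast
  then have potential: "\<forall>x y. {x, y} \<in> E \<longrightarrow> h y = h x * \<psi> x y"
    unfolding h_def using normal_spanning_tree_potential[OF assms(1,5) \<psi>] by blast
  have "h s \<noteq> 0"
    using norm_tree_path_gain[OF T \<psi> \<open>r \<in> V\<close> \<open>s \<in> V\<close>] unfolding h_def by auto
  then have "fund_cycle_gain \<psi> T' s t = 1"
    using fund_cycle_gain_eq_1_if_potential[OF T' potential st] by blast
  then show "fund_cycle_gain \<phi>1 T' s t = fund_cycle_gain \<phi>2 T' s t"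
    using fund_cycle_gain_eq_iff_quotient_eq_1[OF T' assms(4) st] unfolding \<psi>_def by blast
qed

end
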